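(* Let $\mathsf{A}$ be a finite set of $d \times d$ matrices over $\mathbb{C}$, and let $\mathsf{R} \subseteq \mathsf{A}$ be the set of all elements of $\mathsf{A}$ which have rank greater than or equal to two. If $\mathsf{A}$ does not satisfy the finiteness property, then $\mathsf{R}$ contains at least two elements, $\varrho(\mathsf{A})=\varrho(\mathsf{R})$, and $\mathsf{R}$ does not satisfy the finiteness property.
   Context: For a square matrix $A$, $\rho(A)$ denotes its ordinary spectral radius. For a nonempty bounded set $\mathsf{A}$ of $d\times d$ complex matrices, the joint spectral radius is \[\varrho(\mathsf{A})=\lim_{n \to \infty} \sup\left\{\left\|A_{i_n} \cdots A_{i_1}\right\|^{1/n} \colon A_{i_j} \in \mathsf{A}\right\},\] where $\|\cdot\|$ is any matrix norm (the limit exists and is independent of the norm). For $n\ge 1$ let $\mathsf{A}_n=\{A_{i_1}\cdots A_{i_n} \colon A_{i_j}\in\mathsf{A}\}$. A finite nonempty set $\mathsf{A}$ of square matrices is said to have the finiteness property if there exists an integer $N\geq 1$ such that $\varrho(\mathsf{A})=\max\{\rho(A)^{1/N} \colon A \in \mathsf{A}_N\}$. *)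

theory Defs
  imports "Jordan_Normal_Form.Spectral_Radius" "Jordan_Normal_Form.DL_Rank"
begin

text \<open>Frobenius norm of a complex matrix (any norm gives the same joint spectral radius).\<close>
definition mat_norm :: "complex mat \<Rightarrow> real" where
  "mat_norm M = sqrt (\<Sum>i<dim_row M. \<Sum>j<dim_col M. (cmod (M $$ (i,j)))\<^sup>2)"

fun products :: "nat \<Rightarrow> complex mat set \<Rightarrow> nat \<Rightarrow> complex mat set" where
  "products d A 0 = {1\<^sub>m d}"
| "products d A (Suc n) = {M * P | M P. M \<in> A \<and> P \<in> products d A n}"

definition jsr :: "nat \<Rightarrow> complex mat set \<Rightarrow> real" where
  "jsr d A = lim (\<lambda>n. Sup ((\<lambda>P. mat_norm P powr (1 / real n)) ` products d A n))"

definition finiteness_property :: "nat \<Rightarrow> complex mat set \<Rightarrow> bool" where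
  "finiteness_property d A \<longleftrightarrow>
     (\<exists>N\<ge>1. jsr d A = Max ((\<lambda>P. spectral_radius P powr (1 / real N)) ` products d A N))"

end

theory Submission
  imports Defs "HOL-Analysis.Convex"
begin

text \<open>
  Let \<open>R\<close> collect the elements of rank at least two. For a matrix \<open>a\<close> of rank at most one,
  \<open>a = u g\<^sup>T\<close> gives \<open>a Z a = c a\<close> with \<open>c = g\<^sup>T Z u\<close>, an eigenvalue of \<open>a Z\<close>, so \<open>\<bar>c\<bar> \<le> \<rho>(a Z)\<close>.
  Hence a stretch \<open>a z a\<close> inside a product can be shortened to \<open>a\<close> at the cost of the factor
  \<open>\<rho>(a z)\<close>. Without the finiteness property all these factors are at most \<open>\<eta>\<^sup>l\<close> for one fixed
  \<open>\<eta> < jsr A\<close> (\<open>l\<close> the length of \<open>a z\<close>), and after all cuts only words remain in which each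
  low-rank letter occurs at most once. So if the products of \<open>R\<close> of length \<open>m\<close> had norm at most
  \<open>C \<theta>\<^sup>m\<close> with \<open>\<theta> < jsr A\<close>, those of \<open>A\<close> would have norm at most \<open>K \<eta>\<^sup>m\<close>, which is absurd. Applied to \<open>R = {}\<close>, to \<open>R = {B}\<close>
  (where \<open>\<rho>(B) < jsr A\<close>) and to \<open>jsr R < jsr A\<close>, this gives the three claims; a product of \<open>R\<close>
  attaining \<open>jsr R\<close> would then attain \<open>jsr A\<close>.
\<close>

section \<open>The Frobenius norm\<close>

lemma cmod_sum_mult_squared_le:
  fixes f g :: "'a \<Rightarrow> complex"
  shows "(cmod (\<Sum>l\<in>I. f l * g l))\<^sup>2 \<le> (\<Sum>l\<in>I. (cmod (f l))\<^sup>2) * (\<Sum>l\<in>I. (cmod (g l))\<^sup>2)"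
proof -
  have "cmod (\<Sum>l\<in>I. f l * g l) \<le> (\<Sum>l\<in>I. cmod (f l) * cmod (g l))"
    by (metis (no_types, lifting) norm_mult norm_sum sum.cong)
  hence "(cmod (\<Sum>l\<in>I. f l * g l))\<^sup>2 \<le> (\<Sum>l\<in>I. cmod (f l) * cmod (g l))\<^sup>2"
    by (simp add: power_mono)
  also have "\<dots> \<le> (\<Sum>l\<in>I. (cmod (f l))\<^sup>2) * (\<Sum>l\<in>I. (cmod (g l))\<^sup>2)"
    by (rule Cauchy_Schwarz_ineq_sum)
  finally show ?thesis .
qed

definition vec_norm :: "complex vec \<Rightarrow> real" where
  "vec_norm v = sqrt (\<Sum>i<dim_vec v. (cmod (v $ i))\<^sup>2)"

lemma vec_norm_nonneg: "vec_norm v \<ge> 0"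
  unfolding vec_norm_def by (simp add: sum_nonneg)

lemma mat_norm_nonneg: "mat_norm M \<ge> 0"
  unfolding mat_norm_def by (simp add: sum_nonneg)

lemma vec_norm_squared: "(vec_norm v)\<^sup>2 = (\<Sum>i<dim_vec v. (cmod (v $ i))\<^sup>2)"
  unfolding vec_norm_def by (simp add: sum_nonneg)

lemma mat_norm_squared: "(mat_norm M)\<^sup>2 = (\<Sum>i<dim_row M. \<Sum>j<dim_col M. (cmod (M $$ (i,j)))\<^sup>2)"
  unfolding mat_norm_def by (simp add: sum_nonneg)

lemma vec_norm_pos:
  assumes "v \<in> carrier_vec n" "v \<noteq> 0\<^sub>v n"
  shows "vec_norm v > 0"
proof -
  from assms obtain i where i: "i < n" "v $ i \<noteq> 0"
    by (metis carrier_vecD eq_vecI index_zero_vec(1) index_zero_vec(2))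
  have "0 < (cmod (v $ i))\<^sup>2" using i by simp
  also have "\<dots> \<le> (\<Sum>i<dim_vec v. (cmod (v $ i))\<^sup>2)"
    by (rule member_le_sum) (use i assms in auto)
  finally show ?thesis unfolding vec_norm_def by simp
qed

lemma vec_norm_smult: "vec_norm (c \<cdot>\<^sub>v v) = cmod c * vec_norm v"
proof -
  have "(vec_norm (c \<cdot>\<^sub>v v))\<^sup>2 = (cmod c * vec_norm v)\<^sup>2"
    unfolding power_mult_distrib vec_norm_squared
    by (simp add: norm_mult power_mult_distrib sum_distrib_left)
  thus ?thesis using vec_norm_nonneg[of v] vec_norm_nonneg[of "c \<cdot>\<^sub>v v"]
    by (metis norm_ge_zero power2_eq_imp_eq zero_le_mult_iff)
qed

lemma mat_norm_smult: "mat_norm (c \<cdot>\<^sub>m M) = cmod c * mat_norm M"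
proof -
  have "(mat_norm (c \<cdot>\<^sub>m M))\<^sup>2 = (cmod c * mat_norm M)\<^sup>2"
    unfolding power_mult_distrib mat_norm_squared
    by (simp add: norm_mult power_mult_distrib sum_distrib_left)
  thus ?thesis using mat_norm_nonneg[of M] mat_norm_nonneg[of "c \<cdot>\<^sub>m M"]
    by (metis norm_ge_zero power2_eq_imp_eq zero_le_mult_iff)
qed

lemma index_mult_mat_sum:
  assumes "A \<in> carrier_mat n k" "B \<in> carrier_mat k m" "i < n" "j < m"
  shows "(A * B) $$ (i,j) = (\<Sum>l<k. A $$ (i,l) * B $$ (l,j))"
  using assms by (auto simp: scalar_prod_def atLeast0LessThan)

lemma index_mult_mat_vec_sum:
  assumes "A \<in> carrier_mat n k" "v \<in> carrier_vec k" "i < n"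
  shows "(A *\<^sub>v v) $ i = (\<Sum>l<k. A $$ (i,l) * v $ l)"
  using assms by (auto simp: scalar_prod_def atLeast0LessThan)

lemma vec_norm_mult_mat_vec_le:
  assumes M: "M \<in> carrier_mat n m" and v: "v \<in> carrier_vec m"
  shows "vec_norm (M *\<^sub>v v) \<le> mat_norm M * vec_norm v"
proof -
  have "(vec_norm (M *\<^sub>v v))\<^sup>2 = (\<Sum>i<n. (cmod (\<Sum>j<m. M $$ (i,j) * v $ j))\<^sup>2)"
    unfolding vec_norm_squared using M v
    by (intro sum.cong) (auto simp: scalar_prod_def atLeast0LessThan)
  also have "\<dots> \<le> (\<Sum>i<n. (\<Sum>j<m. (cmod (M $$ (i,j)))\<^sup>2) * (\<Sum>j<m. (cmod (v $ j))\<^sup>2))"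
    by (intro sum_mono cmod_sum_mult_squared_le)
  also have "\<dots> = (mat_norm M * vec_norm v)\<^sup>2"
    unfolding power_mult_distrib mat_norm_squared vec_norm_squared using M v
    by (simp add: sum_distrib_right)
  finally show ?thesis using mat_norm_nonneg[of M] vec_norm_nonneg[of v]
    by (meson power2_le_imp_le zero_le_mult_iff)
qed

lemma mat_norm_mult_le:
  assumes A: "A \<in> carrier_mat n k" and B: "B \<in> carrier_mat k m"
  shows "mat_norm (A * B) \<le> mat_norm A * mat_norm B"
proof -
  have "(mat_norm (A * B))\<^sup>2 = (\<Sum>i<n. \<Sum>j<m. (cmod (\<Sum>l<k. A $$ (i,l) * B $$ (l,j)))\<^sup>2)"
    unfolding mat_norm_squared using A B
    by (intro sum.cong) (auto simp: scalar_prod_def atLeast0LessThan)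
  also have "\<dots> \<le> (\<Sum>i<n. \<Sum>j<m. (\<Sum>l<k. (cmod (A $$ (i,l)))\<^sup>2) * (\<Sum>l<k. (cmod (B $$ (l,j)))\<^sup>2))"
    by (intro sum_mono cmod_sum_mult_squared_le)
  also have "\<dots> = (\<Sum>i<n. \<Sum>l<k. (cmod (A $$ (i,l)))\<^sup>2) * (\<Sum>j<m. \<Sum>l<k. (cmod (B $$ (l,j)))\<^sup>2)"
    by (rule sum_product[symmetric])
  also have "(\<Sum>j<m. \<Sum>l<k. (cmod (B $$ (l,j)))\<^sup>2) = (\<Sum>l<k. \<Sum>j<m. (cmod (B $$ (l,j)))\<^sup>2)"
    by (rule sum.swap)
  also have "(\<Sum>i<n. \<Sum>l<k. (cmod (A $$ (i,l)))\<^sup>2) * \<dots> = (mat_norm A * mat_norm B)\<^sup>2"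
    unfolding power_mult_distrib mat_norm_squared using A B by simp
  finally show ?thesis using mat_norm_nonneg[of A] mat_norm_nonneg[of B]
    by (meson power2_le_imp_le zero_le_mult_iff)
qed

lemma mat_norm_le_of_norm_bound:
  assumes "M \<in> carrier_mat n n" "norm_bound M b" "b \<ge> 0"
  shows "mat_norm M \<le> n * b"
proof -
  have "(mat_norm M)\<^sup>2 \<le> (\<Sum>i<n. \<Sum>j<n. b\<^sup>2)"
    unfolding mat_norm_squared carrier_matD[OF assms(1)]
  proof (intro sum_mono)
    fix i j assume "i \<in> {..<n}" "j \<in> {..<n}"
    hence "cmod (M $$ (i,j)) \<le> b" using assms(1,2) unfolding norm_bound_def by auto
    thus "(cmod (M $$ (i,j)))\<^sup>2 \<le> b\<^sup>2" by (simp add: power_mono)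
  qed
  also have "\<dots> = (real n * b)\<^sup>2" by (simp add: power2_eq_square)
  finally show ?thesis by (rule power2_le_imp_le) (use assms(3) in simp)
qed

section \<open>Spectral radius\<close>

lemma spectral_radius_eigenvector:
  assumes "M \<in> carrier_mat d d" "d > 0"
  obtains l v where "eigenvector M v l" "cmod l = spectral_radius M"
proof -
  from spectral_radius_mem_max(1)[OF assms] obtain l
    where "l \<in> spectrum M" "spectral_radius M = cmod l" by auto
  thus ?thesis using that unfolding spectrum_def eigenvalue_def by auto
qed

lemma spectral_radius_nonneg:
  assumes "M \<in> carrier_mat d d" "d > 0"
  shows "spectral_radius M \<ge> 0"
  using spectral_radius_eigenvector[OF assms] by (metis norm_ge_zero)

lemma eigenvalue_norm_le_spectral_radius:
  assumes "M \<in> carrier_mat d d" "d > 0" "eigenvector M v l"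
  shows "cmod l \<le> spectral_radius M"
  using assms spectral_radius_mem_max(2)[OF assms(1,2)]
  unfolding spectrum_def eigenvalue_def by auto

lemma spectral_radius_power_le_mat_norm:
  assumes M: "M \<in> carrier_mat d d" and d: "d > 0"
  shows "spectral_radius M ^ k \<le> mat_norm (M ^\<^sub>m k)"
proof -
  obtain l v where ev: "eigenvector M v l" and l: "cmod l = spectral_radius M"
    using spectral_radius_eigenvector[OF M d] .
  have v: "v \<in> carrier_vec d" "v \<noteq> 0\<^sub>v d" using ev M unfolding eigenvector_def by auto
  have "cmod l ^ k * vec_norm v = vec_norm ((M ^\<^sub>m k) *\<^sub>v v)"
    using eigenvector_pow[OF M ev] by (simp add: vec_norm_smult norm_power)
  also have "\<dots> \<le> mat_norm (M ^\<^sub>m k) * vec_norm v"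
    by (rule vec_norm_mult_mat_vec_le[OF pow_carrier_mat[OF M] v(1)])
  finally show ?thesis using vec_norm_pos[OF v] l by simp
qed

lemma spectral_radius_le_mat_norm:
  assumes "M \<in> carrier_mat d d" "d > 0"
  shows "spectral_radius M \<le> mat_norm M"
  using spectral_radius_power_le_mat_norm[OF assms, of 1] assms(1) by simp

lemma mult_pow_mat_commute:
  assumes B: "(B :: 'a :: semiring_1 mat) \<in> carrier_mat n n"
  shows "B * B ^\<^sub>m k = B ^\<^sub>m k * B"
proof (induction k)
  case (Suc k)
  have "B * B ^\<^sub>m Suc k = (B * B ^\<^sub>m k) * B"
    using B by (simp add: assoc_mult_mat[of _ n n _ n _ n])
  thus ?case using Suc by simp
qed (use B in simp)

lemma smult_pow_mat:
  assumes B: "(B :: complex mat) \<in> carrier_mat n n"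
  shows "(c \<cdot>\<^sub>m B) ^\<^sub>m k = (c ^ k) \<cdot>\<^sub>m (B ^\<^sub>m k)"
proof (induction k)
  case (Suc k)
  have "(c \<cdot>\<^sub>m B) ^\<^sub>m Suc k = (c ^ k) \<cdot>\<^sub>m (B ^\<^sub>m k * (c \<cdot>\<^sub>m B))"
    using Suc B by (simp add: mult_smult_assoc_mat[of _ n n _ n])
  also have "B ^\<^sub>m k * (c \<cdot>\<^sub>m B) = c \<cdot>\<^sub>m (B ^\<^sub>m k * B)"
    using B by (intro mult_smult_distrib[of _ n n _ n]) auto
  finally show ?case by (auto intro!: eq_matI simp: mult.commute mult.left_commute)
qed (use B in \<open>auto intro!: eq_matI\<close>)

lemma eigenvector_smult_mat:
  fixes c :: "'a :: field"
  assumes B: "B \<in> carrier_mat n n" and c: "c \<noteq> 0" and ev: "eigenvector (c \<cdot>\<^sub>m B) v l"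
  shows "eigenvector B v (l / c)"
proof -
  have v: "v \<in> carrier_vec n" "v \<noteq> 0\<^sub>v n" "(c \<cdot>\<^sub>m B) *\<^sub>v v = l \<cdot>\<^sub>v v"
    using ev B unfolding eigenvector_def by auto
  have "(c \<cdot>\<^sub>m B) *\<^sub>v v = c \<cdot>\<^sub>v (B *\<^sub>v v)"
    using v(1) B by (intro eq_vecI) (auto simp: scalar_prod_def sum_distrib_left mult.assoc)
  moreover have "1 / c * c = 1" using c by simp
  ultimately have "B *\<^sub>v v = (1 / c) \<cdot>\<^sub>v (l \<cdot>\<^sub>v v)"
    using v(3) by (simp add: smult_smult_assoc)
  thus ?thesis using v B unfolding eigenvector_def by (simp add: smult_smult_assoc)
qed

lemma mat_norm_pow_le_geometric:
  assumes B: "B \<in> carrier_mat d d" and d: "d > 0" and \<theta>: "spectral_radius B < \<theta>"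
  obtains C where "C \<ge> 1" "\<And>m. mat_norm (B ^\<^sub>m m) \<le> C * \<theta> ^ m"
proof -
  have \<theta>0: "\<theta> > 0" using spectral_radius_nonneg[OF B d] \<theta> by simp
  define c :: complex where "c = of_real (1 / \<theta>)"
  have c: "c \<noteq> 0" "cmod c = 1 / \<theta>" unfolding c_def using \<theta>0 by (auto simp: norm_divide)
  define B' where "B' = c \<cdot>\<^sub>m B"
  have B': "B' \<in> carrier_mat d d" unfolding B'_def using B by simp
  have "spectral_radius B' < 1"
  proof -
    obtain l v where ev: "eigenvector B' v l" and l: "cmod l = spectral_radius B'"
      using spectral_radius_eigenvector[OF B' d] .
    have "cmod (l / c) \<le> spectral_radius B"
      using eigenvalue_norm_le_spectral_radius[OF B d eigenvector_smult_mat[OF B c(1)]] ev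
      unfolding B'_def by blast
    moreover have "cmod (l / c) = cmod l * \<theta>" unfolding c_def using \<theta>0 by (simp add: norm_mult)
    ultimately have "cmod l * \<theta> < \<theta>" using \<theta> by linarith
    thus ?thesis using l \<theta>0 by (simp add: mult_less_cancel_right2)
  qed
  then obtain b where b: "\<And>k. norm_bound (B' ^\<^sub>m k) b"
    using spectral_radius_jnf_norm_bound_less_1_upper_triangular[OF B'] by blast
  have b0: "b \<ge> 0"
    using b[of 0] d B' unfolding norm_bound_def
    by (metis norm_ge_zero order_trans pow_mat_dim_square carrier_matD(1))
  show ?thesis
  proof
    fix m
    have "(1 / \<theta>) ^ m * mat_norm (B ^\<^sub>m m) = mat_norm (B' ^\<^sub>m m)"
      unfolding B'_def smult_pow_mat[OF B] mat_norm_smult c norm_power by simp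
    also have "\<dots> \<le> real d * b" by (rule mat_norm_le_of_norm_bound[OF pow_carrier_mat[OF B'] b b0])
    also have "\<dots> \<le> max 1 (real d * b)" by simp
    finally show "mat_norm (B ^\<^sub>m m) \<le> max 1 (real d * b) * \<theta> ^ m"
      using \<theta>0 by (simp add: power_one_over field_simps)
  qed simp
qed

section \<open>Products and the joint spectral radius\<close>

definition word_prod :: "nat \<Rightarrow> complex mat list \<Rightarrow> complex mat" where
  "word_prod d w = foldr (*) w (1\<^sub>m d)"

lemma word_prod_Nil [simp]: "word_prod d [] = 1\<^sub>m d"
  by (simp add: word_prod_def)

lemma word_prod_Cons [simp]: "word_prod d (M # w) = M * word_prod d w"
  by (simp add: word_prod_def)

lemma word_prod_carrier: "set w \<subseteq> carrier_mat d d \<Longrightarrow> word_prod d w \<in> carrier_mat d d"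
  by (induction w) auto

lemma word_prod_append:
  assumes "set w1 \<subseteq> carrier_mat d d" "set w2 \<subseteq> carrier_mat d d"
  shows "word_prod d (w1 @ w2) = word_prod d w1 * word_prod d w2"
  using assms(1)
proof (induction w1)
  case (Cons M w1)
  hence M: "M \<in> carrier_mat d d" and w1: "set w1 \<subseteq> carrier_mat d d" by auto
  thus ?case
    using Cons assoc_mult_mat[OF M word_prod_carrier[OF w1] word_prod_carrier[OF assms(2)]] by simp
qed (use word_prod_carrier[OF assms(2)] in simp)

lemma products_eq_word_prods: "products d X n = {word_prod d w | w. set w \<subseteq> X \<and> length w = n}"
proof (induction n)
  case (Suc n)
  show ?case
  proof (intro equalityI subsetI)
    fix P assume "P \<in> products d X (Suc n)"
    then obtain M w where "P = M * word_prod d w" "M \<in> X" "set w \<subseteq> X" "length w = n"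
      using Suc by auto
    thus "P \<in> {word_prod d w | w. set w \<subseteq> X \<and> length w = Suc n}"
      by (intro CollectI exI[of _ "M # w"]) auto
  next
    fix P assume "P \<in> {word_prod d w | w. set w \<subseteq> X \<and> length w = Suc n}"
    then obtain w where w: "P = word_prod d w" "set w \<subseteq> X" "length w = Suc n" by auto
    then obtain M w' where "w = M # w'" by (cases w) auto
    thus "P \<in> products d X (Suc n)" using w Suc by auto
  qed
qed simp

lemma word_prod_mem_products: "set w \<subseteq> X \<Longrightarrow> word_prod d w \<in> products d X (length w)"
  unfolding products_eq_word_prods by blast

lemma products_carrier: "X \<subseteq> carrier_mat d d \<Longrightarrow> products d X n \<subseteq> carrier_mat d d"
  unfolding products_eq_word_prods using word_prod_carrier by blast

lemma finite_products: "finite X \<Longrightarrow> finite (products d X n)"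
proof (induction n)
  case (Suc n)
  have "products d X (Suc n) = (\<lambda>(M,P). M * P) ` (X \<times> products d X n)" by auto
  thus ?case using Suc by simp
qed simp

lemma products_nonempty: "X \<noteq> {} \<Longrightarrow> products d X n \<noteq> {}"
  by (induction n) auto

lemma products_mono: "X \<subseteq> Y \<Longrightarrow> products d X n \<subseteq> products d Y n"
  by (induction n) auto

lemma products_mult:
  assumes X: "X \<subseteq> carrier_mat d d" and P: "P \<in> products d X m" and Q: "Q \<in> products d X n"
  shows "P * Q \<in> products d X (m + n)"
proof -
  obtain w1 w2 where "P = word_prod d w1" "set w1 \<subseteq> X" "length w1 = m"
    and "Q = word_prod d w2" "set w2 \<subseteq> X" "length w2 = n"
    using P Q unfolding products_eq_word_prods by auto
  thus ?thesis using X word_prod_append[of w1 d w2] word_prod_mem_products[of "w1 @ w2" X d] by auto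
qed

lemma products_add_split:
  assumes X: "X \<subseteq> carrier_mat d d" and P: "P \<in> products d X (m + n)"
  obtains P1 P2 where "P1 \<in> products d X m" "P2 \<in> products d X n" "P = P1 * P2"
proof -
  obtain w where w: "P = word_prod d w" "set w \<subseteq> X" "length w = m + n"
    using P unfolding products_eq_word_prods by auto
  have "P = word_prod d (take m w) * word_prod d (drop m w)"
    using w X word_prod_append[of "take m w" d "drop m w"]
    by (metis append_take_drop_id order_trans set_drop_subset set_take_subset)
  moreover have "word_prod d (take m w) \<in> products d X m" "word_prod d (drop m w) \<in> products d X n"
    using w word_prod_mem_products[of "take m w" X d] word_prod_mem_products[of "drop m w" X d]
    by (auto dest: in_set_takeD in_set_dropD)
  ultimately show ?thesis using that by blast
qed

lemma products_pow_mat: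
  assumes X: "X \<subseteq> carrier_mat d d" and P: "P \<in> products d X n"
  shows "P ^\<^sub>m k \<in> products d X (n * k)"
proof (induction k)
  case (Suc k)
  have "P ^\<^sub>m k * P \<in> products d X (n * k + n)" by (rule products_mult[OF X Suc P])
  thus ?case by (simp add: add.commute)
qed (use products_carrier[OF X] P in auto)

lemma products_singleton:
  assumes B: "B \<in> carrier_mat d d"
  shows "products d {B} m = {B ^\<^sub>m m}"
  by (induction m) (use B mult_pow_mat_commute[OF B] in auto)

definition max_prod_norm :: "nat \<Rightarrow> complex mat set \<Rightarrow> nat \<Rightarrow> real" where
  "max_prod_norm d X n = Max (mat_norm ` products d X n)"

lemma mat_norm_le_max_prod_norm:
  "finite X \<Longrightarrow> P \<in> products d X n \<Longrightarrow> mat_norm P \<le> max_prod_norm d X n"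
  unfolding max_prod_norm_def by (rule Max_ge) (auto simp: finite_products)

lemma max_prod_norm_attained:
  assumes "finite X" "X \<noteq> {}"
  obtains P where "P \<in> products d X n" "max_prod_norm d X n = mat_norm P"
proof -
  have "Max (mat_norm ` products d X n) \<in> mat_norm ` products d X n"
    using assms by (intro Max_in) (auto simp: finite_products products_nonempty)
  thus ?thesis using that unfolding max_prod_norm_def by blast
qed

lemma max_prod_norm_nonneg: "finite X \<Longrightarrow> X \<noteq> {} \<Longrightarrow> max_prod_norm d X n \<ge> 0"
  by (metis max_prod_norm_attained mat_norm_nonneg)

lemma max_prod_norm_add_le:
  assumes "finite X" "X \<noteq> {}" "X \<subseteq> carrier_mat d d"
  shows "max_prod_norm d X (m + n) \<le> max_prod_norm d X m * max_prod_norm d X n"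
proof -
  obtain P where P: "P \<in> products d X (m + n)" "max_prod_norm d X (m + n) = mat_norm P"
    using max_prod_norm_attained[OF assms(1,2)] .
  obtain P1 P2 where P12: "P1 \<in> products d X m" "P2 \<in> products d X n" "P = P1 * P2"
    using products_add_split[OF assms(3) P(1)] .
  have "mat_norm P \<le> mat_norm P1 * mat_norm P2"
    unfolding P12(3) using products_carrier[OF assms(3)] P12
    by (intro mat_norm_mult_le[of P1 d d P2 d]) auto
  also have "\<dots> \<le> max_prod_norm d X m * max_prod_norm d X n"
    by (intro mult_mono mat_norm_le_max_prod_norm assms P12 mat_norm_nonneg max_prod_norm_nonneg)
  finally show ?thesis using P by simp
qed

lemma max_prod_norm_mono:
  "X \<subseteq> Y \<Longrightarrow> finite Y \<Longrightarrow> X \<noteq> {} \<Longrightarrow> max_prod_norm d X n \<le> max_prod_norm d Y n"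
  unfolding max_prod_norm_def
  by (rule Max_mono) (auto simp: finite_products products_nonempty dest: products_mono[of X Y d n])

lemma jsr_eq_lim_max_prod_norm:
  assumes "finite X" "X \<noteq> {}"
  shows "jsr d X = lim (\<lambda>n. max_prod_norm d X n powr (1 / real n))"
proof -
  have "Sup ((\<lambda>P. mat_norm P powr (1 / real n)) ` products d X n) = max_prod_norm d X n powr (1 / real n)"
    for n
  proof -
    let ?S = "(\<lambda>P. mat_norm P powr (1 / real n)) ` products d X n"
    have S: "finite ?S" "?S \<noteq> {}" using assms by (auto simp: finite_products products_nonempty)
    obtain P where P: "P \<in> products d X n" "max_prod_norm d X n = mat_norm P"
      using max_prod_norm_attained[OF assms] .
    have "Max ?S \<le> max_prod_norm d X n powr (1 / real n)"
      using S by (auto intro!: powr_mono2 mat_norm_nonneg mat_norm_le_max_prod_norm assms)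
    moreover have "max_prod_norm d X n powr (1 / real n) \<le> Max ?S"
      using S P by (intro Max_ge) auto
    ultimately have "Max ?S = max_prod_norm d X n powr (1 / real n)" by simp
    thus ?thesis using S by (simp add: cSup_eq_Max)
  qed
  thus ?thesis unfolding jsr_def by simp
qed

lemma powr_inverse_power:
  fixes x :: real
  assumes "x \<ge> 0" "n > 0"
  shows "(x powr (1 / real n)) ^ n = x"
  using assms by (cases "x = 0") (simp_all add: powr_realpow[symmetric] powr_powr)

lemma power_powr_inverse:
  fixes x :: real
  assumes "x \<ge> 0" "n > 0"
  shows "(x ^ n) powr (1 / real n) = x"
  using assms by (cases "x = 0") (simp_all add: powr_realpow[symmetric] powr_powr)

lemma geometric_root_tendsto:
  fixes K b :: real
  assumes "K > 0" "b \<ge> 0"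
  shows "(\<lambda>n. (K * b ^ n) powr (1 / real n)) \<longlonglongrightarrow> b"
proof -
  have "(\<lambda>n. K powr (1 / real n) * b) \<longlonglongrightarrow> K powr 0 * b"
    by (intro tendsto_mult tendsto_const tendsto_powr lim_1_over_n) (use assms in auto)
  moreover have "eventually (\<lambda>n. K powr (1 / real n) * b = (K * b ^ n) powr (1 / real n)) sequentially"
    using eventually_gt_at_top[of 0]
    by eventually_elim (use assms in \<open>simp add: powr_mult power_powr_inverse\<close>)
  ultimately show ?thesis using assms(1) by (auto elim: Lim_transform_eventually)
qed

lemma submultiplicative_le_geometric:
  fixes s :: "nat \<Rightarrow> real"
  assumes nonneg: "\<And>n. s n \<ge> 0" and submult: "\<And>m n. s (m + n) \<le> s m * s n"
    and m: "m \<ge> 1" and b: "b > 0" and sm: "s m \<le> b ^ m"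
  obtains K where "K > 0" "\<And>n. s n \<le> K * b ^ n"
proof -
  have split: "s (q * m + r) \<le> s m ^ q * s r" for q r
  proof (induction q)
    case (Suc q)
    have "s (Suc q * m + r) \<le> s m * s (q * m + r)"
      using submult[of m "q * m + r"] by (simp add: add.assoc)
    also have "\<dots> \<le> s m * (s m ^ q * s r)" by (rule mult_left_mono[OF Suc nonneg])
    finally show ?case by (simp add: mult.assoc)
  qed simp
  define K where "K = 1 + (\<Sum>r<m. s r / b ^ r)"
  have K: "K > 0" unfolding K_def using b nonneg by (simp add: add_pos_nonneg sum_nonneg)
  have "s n \<le> K * b ^ n" for n
  proof -
    define q r where "q = n div m" and "r = n mod m"
    have n: "n = q * m + r" and r: "r < m" unfolding q_def r_def using m by simp_all
    have "s r / b ^ r \<le> K" unfolding K_def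
      using member_le_sum[of r "{..<m}" "\<lambda>r. s r / b ^ r"] r nonneg b by simp
    hence sr: "s r \<le> K * b ^ r" using b by (simp add: divide_le_eq)
    have "s n \<le> s m ^ q * s r" using split n by simp
    also have "\<dots> \<le> (b ^ m) ^ q * (K * b ^ r)"
      by (intro mult_mono power_mono sm sr) (use nonneg b in auto)
    also have "\<dots> = K * b ^ n" unfolding n by (simp add: power_add power_mult mult_ac)
    finally show ?thesis .
  qed
  with K show ?thesis using that by blast
qed

lemma submultiplicative_root_tendsto_Inf:
  fixes s :: "nat \<Rightarrow> real"
  assumes nonneg: "\<And>n. s n \<ge> 0" and submult: "\<And>m n. s (m + n) \<le> s m * s n"
  shows "(\<lambda>n. s n powr (1 / real n)) \<longlonglongrightarrow> Inf ((\<lambda>n. s n powr (1 / real n)) ` {1..})"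
proof -
  define a where "a n = s n powr (1 / real n)" for n
  let ?L = "Inf (a ` {1..})"
  have bdd: "bdd_below (a ` {1..})" by (rule bdd_belowI[of _ 0]) (auto simp: a_def)
  have "a \<longlonglongrightarrow> ?L"
  proof (rule order_tendstoI)
    fix y assume y: "y < ?L"
    have "?L \<le> a n" if "n \<ge> 1" for n using bdd that by (auto intro: cInf_lower)
    thus "eventually (\<lambda>n. y < a n) sequentially"
      by (intro eventually_mono[OF eventually_ge_at_top[of 1]]) (use y in force)
  next
    fix y assume y: "?L < y"
    have "?L \<ge> 0" by (rule cInf_greatest) (auto simp: a_def)
    define b where "b = (?L + y) / 2"
    have b: "?L < b" "b < y" "b > 0" using y \<open>?L \<ge> 0\<close> by (auto simp: b_def)
    then obtain m where m: "m \<ge> 1" "a m < b"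
      using cInf_less_iff[of "a ` {1..}" b] bdd by auto
    have "s m = a m ^ m" unfolding a_def using powr_inverse_power[OF nonneg, of m] m by simp
    also have "\<dots> \<le> b ^ m" using m by (intro power_mono) (auto simp: a_def)
    finally obtain K where K: "K > 0" "\<And>n. s n \<le> K * b ^ n"
      by (rule submultiplicative_le_geometric[OF nonneg submult m(1) b(3)]) blast
    have "eventually (\<lambda>n. (K * b ^ n) powr (1 / real n) < y) sequentially"
      using geometric_root_tendsto[OF K(1)] b by (intro order_tendstoD(2)) auto
    thus "eventually (\<lambda>n. a n < y) sequentially"
    proof eventually_elim
      case (elim n)
      have "a n \<le> (K * b ^ n) powr (1 / real n)" unfolding a_def by (intro powr_mono2 K nonneg) auto
      thus ?case using elim by linarith
    qed
  qed
  thus ?thesis unfolding a_def .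
qed

lemma jsr_eq_Inf_max_prod_norm_root:
  assumes X: "finite X" "X \<noteq> {}" "X \<subseteq> carrier_mat d d"
  shows "jsr d X = Inf ((\<lambda>n. max_prod_norm d X n powr (1 / real n)) ` {1..})"
  unfolding jsr_eq_lim_max_prod_norm[OF X(1,2)]
  by (intro limI submultiplicative_root_tendsto_Inf max_prod_norm_nonneg max_prod_norm_add_le X)

lemma max_prod_norm_root_tendsto_jsr:
  assumes X: "finite X" "X \<noteq> {}" "X \<subseteq> carrier_mat d d"
  shows "(\<lambda>n. max_prod_norm d X n powr (1 / real n)) \<longlonglongrightarrow> jsr d X"
  unfolding jsr_eq_Inf_max_prod_norm_root[OF X]
  by (intro submultiplicative_root_tendsto_Inf max_prod_norm_nonneg max_prod_norm_add_le X)

lemma jsr_le_max_prod_norm_root: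
  assumes X: "finite X" "X \<noteq> {}" "X \<subseteq> carrier_mat d d" and n: "n \<ge> 1"
  shows "jsr d X \<le> max_prod_norm d X n powr (1 / real n)"
  unfolding jsr_eq_Inf_max_prod_norm_root[OF X] using n
  by (intro cInf_lower bdd_belowI[of _ 0]) auto

lemma jsr_nonneg:
  assumes X: "finite X" "X \<noteq> {}" "X \<subseteq> carrier_mat d d"
  shows "jsr d X \<ge> 0"
  unfolding jsr_eq_Inf_max_prod_norm_root[OF X] by (rule cInf_greatest) auto

lemma jsr_mono:
  assumes "X \<subseteq> Y" "X \<noteq> {}" "finite Y" "Y \<subseteq> carrier_mat d d"
  shows "jsr d X \<le> jsr d Y"
proof (rule LIMSEQ_le)
  have X: "finite X" "X \<subseteq> carrier_mat d d" using assms finite_subset by auto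
  show "(\<lambda>n. max_prod_norm d X n powr (1 / real n)) \<longlonglongrightarrow> jsr d X"
    using max_prod_norm_root_tendsto_jsr[OF X(1) assms(2) X(2)] .
  show "(\<lambda>n. max_prod_norm d Y n powr (1 / real n)) \<longlonglongrightarrow> jsr d Y"
    using max_prod_norm_root_tendsto_jsr assms by blast
  show "\<exists>N. \<forall>n\<ge>N. max_prod_norm d X n powr (1 / real n) \<le> max_prod_norm d Y n powr (1 / real n)"
    using assms X by (intro exI[of _ 0] allI impI powr_mono2 max_prod_norm_mono max_prod_norm_nonneg) auto
qed

definition products_bounded :: "nat \<Rightarrow> complex mat set \<Rightarrow> real \<Rightarrow> real \<Rightarrow> bool" where
  "products_bounded d X C \<theta> \<longleftrightarrow> (\<forall>m. \<forall>Q \<in> products d X m. mat_norm Q \<le> C * \<theta> ^ m)"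

lemma jsr_le_of_products_bounded:
  assumes X: "finite X" "X \<noteq> {}" "X \<subseteq> carrier_mat d d"
    and bounded: "products_bounded d X C \<theta>" and C: "C > 0" and \<theta>: "\<theta> \<ge> 0"
  shows "jsr d X \<le> \<theta>"
proof (rule LIMSEQ_le_const[OF geometric_root_tendsto[OF C \<theta>]], intro exI[of _ 1] allI impI)
  fix n :: nat assume n: "n \<ge> 1"
  obtain P where P: "P \<in> products d X n" "max_prod_norm d X n = mat_norm P"
    using max_prod_norm_attained[OF X(1,2)] .
  have "jsr d X \<le> max_prod_norm d X n powr (1 / real n)" by (rule jsr_le_max_prod_norm_root[OF X n])
  also have "\<dots> \<le> (C * \<theta> ^ n) powr (1 / real n)"
    using bounded P by (intro powr_mono2) (auto simp: products_bounded_def mat_norm_nonneg)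
  finally show "jsr d X \<le> (C * \<theta> ^ n) powr (1 / real n)" .
qed

lemma products_bounded_of_jsr_less:
  assumes X: "finite X" "X \<noteq> {}" "X \<subseteq> carrier_mat d d" and \<theta>: "jsr d X < \<theta>"
  obtains C where "C \<ge> 1" "products_bounded d X C \<theta>"
proof -
  have \<theta>0: "\<theta> > 0" using jsr_nonneg[OF X] \<theta> by simp
  obtain m where m: "max_prod_norm d X m powr (1 / real m) < \<theta>" "m \<ge> 1"
    using eventually_conj[OF order_tendstoD(2)[OF max_prod_norm_root_tendsto_jsr[OF X] \<theta>]
        eventually_ge_at_top[of 1]]
    unfolding eventually_sequentially by blast
  have "max_prod_norm d X m = (max_prod_norm d X m powr (1 / real m)) ^ m"
    using powr_inverse_power[OF max_prod_norm_nonneg[OF X(1,2)], of m] m by simp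
  also have "\<dots> \<le> \<theta> ^ m" using m by (intro power_mono) auto
  finally obtain K where K: "K > 0" "\<And>n. max_prod_norm d X n \<le> K * \<theta> ^ n"
    by (rule submultiplicative_le_geometric[OF max_prod_norm_nonneg[OF X(1,2)]
          max_prod_norm_add_le[OF X] m(2) \<theta>0]) blast
  have "products_bounded d X (max 1 K) \<theta>"
    unfolding products_bounded_def
    using mat_norm_le_max_prod_norm[OF X(1)] K(2) \<theta>0
    by (meson max.cobounded2 mult_right_mono order_trans zero_le_power less_imp_le)
  thus ?thesis by (rule that[OF max.cobounded1])
qed

lemma spectral_radius_root_le_jsr:
  assumes X: "finite X" "X \<noteq> {}" "X \<subseteq> carrier_mat d d" and d: "d > 0"
    and P: "P \<in> products d X n" and n: "n \<ge> 1"
  shows "spectral_radius P powr (1 / real n) \<le> jsr d X"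
proof -
  have Pc: "P \<in> carrier_mat d d" using products_carrier[OF X(3)] P by auto
  define r where "r = spectral_radius P"
  have r0: "r \<ge> 0" unfolding r_def by (rule spectral_radius_nonneg[OF Pc d])
  \<comment> \<open>Gelfand's bound along the powers \<open>P\<^sup>k\<close>, which are products of length \<open>n k\<close>.\<close>
  have bound: "r powr (1 / real n) \<le> max_prod_norm d X (n * Suc k) powr (1 / real (n * Suc k))" for k
  proof -
    have "r ^ Suc k \<le> max_prod_norm d X (n * Suc k)"
      using spectral_radius_power_le_mat_norm[OF Pc d, of "Suc k"]
        mat_norm_le_max_prod_norm[OF X(1) products_pow_mat[OF X(3) P, of "Suc k"]]
      unfolding r_def by linarith
    hence "(r ^ Suc k) powr (1 / real (n * Suc k)) \<le> max_prod_norm d X (n * Suc k) powr (1 / real (n * Suc k))"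
      using r0 by (intro powr_mono2) auto
    moreover have "(r ^ Suc k) powr (1 / real (n * Suc k)) = r powr (1 / real n)"
    proof (cases "r = 0")
      case False
      hence "(r ^ Suc k) powr (1 / real (n * Suc k)) = (r powr real (Suc k)) powr (1 / real (n * Suc k))"
        using r0 False by (simp only: powr_realpow[of r] order.not_eq_order_implies_strict)
      also have "\<dots> = r powr (real (Suc k) * (1 / real (n * Suc k)))" by (rule powr_powr)
      also have "real (Suc k) * (1 / real (n * Suc k)) = 1 / real n" 
        by (simp only: of_nat_mult) (simp add: divide_simps del: of_nat_Suc)
      finally show ?thesis .
    qed (use n in simp)
    ultimately show ?thesis by simp
  qed
  have "(\<lambda>k. max_prod_norm d X (n * Suc k) powr (1 / real (n * Suc k))) \<longlonglongrightarrow> jsr d X"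
    using LIMSEQ_subseq_LIMSEQ[OF max_prod_norm_root_tendsto_jsr[OF X], of "\<lambda>k. n * Suc k"] n
    by (simp add: strict_mono_def o_def)
  thus ?thesis unfolding r_def[symmetric] by (rule LIMSEQ_le_const) (use bound in auto)
qed

lemma spectral_radius_root_less_jsr:
  assumes A: "finite A" "A \<noteq> {}" "A \<subseteq> carrier_mat d d" and d: "d > 0"
    and no_fp: "\<not> finiteness_property d A"
    and l: "l \<ge> 1" and P: "P \<in> products d A l"
  shows "spectral_radius P powr (1 / real l) < jsr d A"
proof (rule ccontr)
  let ?S = "(\<lambda>P. spectral_radius P powr (1 / real l)) ` products d A l"
  have S: "finite ?S" "?S \<noteq> {}" using A by (auto simp: finite_products products_nonempty)
  have le: "x \<le> jsr d A" if "x \<in> ?S" for x using that spectral_radius_root_le_jsr[OF A d _ l] by auto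
  assume "\<not> ?thesis"
  hence "spectral_radius P powr (1 / real l) = jsr d A" using le P by force
  hence "jsr d A \<le> Max ?S" using S P by (metis Max_ge image_eqI)
  hence "Max ?S = jsr d A" using S le by (intro antisym) auto
  thus False using no_fp l unfolding finiteness_property_def by auto
qed

lemma not_finiteness_property_of_subset:
  assumes A: "finite A" "A \<noteq> {}" "A \<subseteq> carrier_mat d d" and d: "d > 0"
    and no_fp: "\<not> finiteness_property d A"
    and R: "R \<subseteq> A" "R \<noteq> {}" and jsr_eq: "jsr d R = jsr d A"
  shows "\<not> finiteness_property d R"
proof
  assume "finiteness_property d R"
  then obtain N where N: "N \<ge> 1"
    "jsr d R = Max ((\<lambda>P. spectral_radius P powr (1 / real N)) ` products d R N)"
    unfolding finiteness_property_def by blast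
  have "finite R" using R A finite_subset by auto
  hence "jsr d R \<in> (\<lambda>P. spectral_radius P powr (1 / real N)) ` products d R N"
    unfolding N(2) using R by (intro Max_in) (auto simp: finite_products products_nonempty)
  then obtain P where "P \<in> products d R N" "spectral_radius P powr (1 / real N) = jsr d A"
    using jsr_eq by auto
  moreover have "products d R N \<subseteq> products d A N" by (rule products_mono[OF R(1)])
  ultimately show False using spectral_radius_root_less_jsr[OF A d no_fp N(1)] by fastforce
qed

section \<open>Matrices of rank at most one\<close>

lemma (in vec_space) lin_dep_pair_multiple:
  assumes u: "u \<in> carrier_vec n" and w: "w \<in> carrier_vec n" and i: "i < n" "u $ i \<noteq> 0"
    and uw: "u \<noteq> w" and dep: "lin_dep {u, w}"
  obtains t where "w = t \<cdot>\<^sub>v u"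
proof -
  define B where "B = mat_of_cols n [u, w]"
  have B: "B \<in> carrier_mat n 2"
    unfolding B_def using mat_of_cols_carrier[of n "[u, w]"] by (simp add: numeral_2_eq_2)
  have cols: "cols B = [u, w]" unfolding B_def using u w by (intro cols_mat_of_cols) auto
  obtain v where v: "v \<in> carrier_vec 2" "v \<noteq> 0\<^sub>v 2" "B *\<^sub>v v = 0\<^sub>v n"
    using lin_depE[OF B] dep uw unfolding cols by auto
  have comb: "u $ k * v $ 0 + w $ k * v $ 1 = 0" if k: "k < n" for k
  proof -
    have "(B *\<^sub>v v) $ k = u $ k * v $ 0 + w $ k * v $ 1"
      using index_mult_mat_vec_sum[OF B v(1) k] k
      unfolding B_def by (simp add: numeral_2_eq_2 mat_of_cols_index)
    thus ?thesis using v(3) k by simp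
  qed
  have "v $ 1 \<noteq> 0"
  proof
    assume v1: "v $ 1 = 0"
    hence "v $ 0 \<noteq> 0" using v(1,2) by (auto intro!: eq_vecI simp: less_2_cases_iff)
    thus False using comb[OF i(1)] v1 i(2) by simp
  qed
  have "w = (- (v $ 0) / v $ 1) \<cdot>\<^sub>v u"
  proof (rule eq_vecI)
    fix k assume "k < dim_vec ((- (v $ 0) / v $ 1) \<cdot>\<^sub>v u)"
    hence k: "k < n" using u by simp
    have "w $ k * v $ 1 = - (v $ 0) * u $ k" using comb[OF k] by (simp add: eq_neg_iff_add_eq_0 algebra_simps)
    hence "w $ k = (- (v $ 0) / v $ 1) * u $ k" using \<open>v $ 1 \<noteq> 0\<close> by (simp add: field_simps)
    thus "w $ k = ((- (v $ 0) / v $ 1) \<cdot>\<^sub>v u) $ k" using k u by simp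
  qed (use u w in simp)
  thus ?thesis by (rule that)
qed

lemma (in vec_space) rank_less_2_col_multiple:
  assumes a: "a \<in> carrier_mat n n" and r: "rank a < 2"
    and i0: "i0 < n" and j0: "j0 < n" "a $$ (i0, j0) \<noteq> 0" and j: "j < n"
  obtains t where "col a j = t \<cdot>\<^sub>v col a j0"
proof (cases "col a j = col a j0")
  case True
  thus ?thesis using that[of 1] a j0 by simp
next
  case False
  have "lin_dep {col a j0, col a j}"
  proof (rule ccontr)
    assume "\<not> lin_dep {col a j0, col a j}"
    hence "card {col a j0, col a j} \<le> rank a"
      using j0 j a by (intro rank_ge_card_indpt[OF a]) (auto simp: cols_def)
    thus False using False r by simp
  qed
  thus ?thesis
    using lin_dep_pair_multiple[of "col a j0" "col a j" i0] False a i0 j0 j that by auto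
qed

lemma rank_less_2_outer_product:
  fixes a :: "complex mat"
  assumes a: "a \<in> carrier_mat d d" and r: "vec_space.rank d a < 2" and nz: "a \<noteq> 0\<^sub>m d d"
  obtains u g where "u \<in> carrier_vec d" "u \<noteq> 0\<^sub>v d" "\<And>i j. i < d \<Longrightarrow> j < d \<Longrightarrow> a $$ (i,j) = u $ i * g j"
proof -
  interpret vec_space "TYPE(complex)" d .
  obtain i0 j0 where ij: "i0 < d" "j0 < d" "a $$ (i0,j0) \<noteq> 0"
    using nz a by (metis carrier_matD eq_matI index_zero_mat)
  define u where "u = col a j0"
  have u: "u \<in> carrier_vec d" and "u $ i0 \<noteq> 0" unfolding u_def using a ij by auto
  hence u_nz: "u \<noteq> 0\<^sub>v d" using ij by auto
  have "\<forall>j. \<exists>t. j < d \<longrightarrow> col a j = t \<cdot>\<^sub>v u"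
  proof (intro allI)
    fix j show "\<exists>t. j < d \<longrightarrow> col a j = t \<cdot>\<^sub>v u"
      using rank_less_2_col_multiple[OF a r ij, of j] unfolding u_def by blast
  qed
  then obtain g where g: "\<And>j. j < d \<Longrightarrow> col a j = g j \<cdot>\<^sub>v u" by (metis choice)
  have "a $$ (i,j) = u $ i * g j" if "i < d" "j < d" for i j
    using arg_cong[OF g[OF that(2)], of "\<lambda>v. v $ i"] that a u by (simp add: mult.commute)
  thus ?thesis using that u u_nz by blast
qed

lemma outer_product_sandwich:
  fixes a Z :: "complex mat"
  assumes u: "u \<in> carrier_vec d" and au: "\<And>i j. i < d \<Longrightarrow> j < d \<Longrightarrow> a $$ (i,j) = u $ i * g j"
    and a: "a \<in> carrier_mat d d" and Z: "Z \<in> carrier_mat d d"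
  defines "c \<equiv> \<Sum>l<d. (\<Sum>k<d. g k * Z $$ (k,l)) * u $ l"
  shows "a * Z * a = c \<cdot>\<^sub>m a" and "(a * Z) *\<^sub>v u = c \<cdot>\<^sub>v u"
proof -
  define h where "h l = (\<Sum>k<d. g k * Z $$ (k,l))" for l
  have aZ: "a * Z \<in> carrier_mat d d" using a Z by simp
  have aZ_entry: "(a * Z) $$ (i,l) = u $ i * h l" if "i < d" "l < d" for i l
  proof -
    have "(a * Z) $$ (i,l) = (\<Sum>k<d. u $ i * (g k * Z $$ (k,l)))"
      using index_mult_mat_sum[OF a Z that] au that by (simp add: mult.assoc)
    thus ?thesis unfolding h_def by (simp add: sum_distrib_left)
  qed
  show "a * Z * a = c \<cdot>\<^sub>m a"
  proof (rule eq_matI)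
    fix i j assume "i < dim_row (c \<cdot>\<^sub>m a)" "j < dim_col (c \<cdot>\<^sub>m a)"
    hence i: "i < d" and j: "j < d" using a by auto
    have "(a * Z * a) $$ (i,j) = (\<Sum>l<d. (u $ i * g j) * (h l * u $ l))"
      using index_mult_mat_sum[OF aZ a i j] aZ_entry au i j by (auto intro!: sum.cong)
    also have "\<dots> = c * a $$ (i,j)"
      unfolding c_def h_def using au i j by (simp add: sum_distrib_left mult_ac)
    finally show "(a * Z * a) $$ (i,j) = (c \<cdot>\<^sub>m a) $$ (i,j)" using i j a by simp
  qed (use a Z in auto)
  show "(a * Z) *\<^sub>v u = c \<cdot>\<^sub>v u"
  proof (rule eq_vecI)
    fix i assume "i < dim_vec (c \<cdot>\<^sub>v u)"
    hence i: "i < d" using u by auto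
    have "((a * Z) *\<^sub>v u) $ i = (\<Sum>l<d. u $ i * (h l * u $ l))"
      using index_mult_mat_vec_sum[OF aZ u i] aZ_entry i by (auto intro!: sum.cong)
    also have "\<dots> = c * u $ i" unfolding c_def h_def by (simp add: sum_distrib_left mult_ac)
    finally show "((a * Z) *\<^sub>v u) $ i = (c \<cdot>\<^sub>v u) $ i" using i u by simp
  qed (use a Z u in auto)
qed

lemma rank_less_2_sandwich:
  fixes a Z :: "complex mat"
  assumes a: "a \<in> carrier_mat d d" and r: "vec_space.rank d a < 2" and Z: "Z \<in> carrier_mat d d"
    and d: "d > 0"
  obtains c where "a * Z * a = c \<cdot>\<^sub>m a" "cmod c \<le> spectral_radius (a * Z)"
proof (cases "a = 0\<^sub>m d d")
  case True
  thus ?thesis using that[of 0] spectral_radius_nonneg[of "a * Z" d] a Z d by simp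
next
  case False
  then obtain u g where u: "u \<in> carrier_vec d" "u \<noteq> 0\<^sub>v d"
    and ug: "\<And>i j. i < d \<Longrightarrow> j < d \<Longrightarrow> a $$ (i,j) = u $ i * g j"
    using rank_less_2_outer_product[OF a r] by metis
  note sandwich = outer_product_sandwich[OF u(1) ug a Z]
  have "eigenvector (a * Z) u (\<Sum>l<d. (\<Sum>k<d. g k * Z $$ (k,l)) * u $ l)"
    unfolding eigenvector_def using sandwich(2) u a by simp
  thus ?thesis
    using that sandwich(1) eigenvalue_norm_le_spectral_radius[of "a * Z" d] a Z d by simp
qed

section \<open>Cutting loops out of products\<close>

lemma not_distinct_filter_split:
  assumes "\<not> distinct (filter P w)"
  obtains w1 a z w2 where "w = w1 @ a # z @ a # w2" "P a" "distinct (filter P (a # z))"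
  using assms
proof (induction w arbitrary: thesis)
  case (Cons x w)
  show ?case
  proof (cases "distinct (filter P w)")
    case False
    then obtain w1 a z w2 where "w = w1 @ a # z @ a # w2" "P a" "distinct (filter P (a # z))"
      using Cons.IH by blast
    thus ?thesis using Cons.prems(1)[of "x # w1"] by simp
  next
    case True
    hence "P x" "x \<in> set w" using Cons.prems(2) by (auto split: if_splits)
    then obtain ys zs where w: "w = ys @ x # zs" "x \<notin> set ys" by (metis split_list_first)
    hence "distinct (filter P (x # ys))" using True \<open>P x\<close> by simp
    thus ?thesis using Cons.prems(1)[of "[]" x ys zs] w \<open>P x\<close> by simp
  qed
qed simp

lemma word_prod_norm_le_segments:
  assumes A: "A \<subseteq> carrier_mat d d" and R: "R \<subseteq> A" and \<theta>: "\<theta> > 0" and C: "C \<ge> 1"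
    and D: "D \<ge> 0" "\<And>M. M \<in> A \<Longrightarrow> mat_norm M \<le> D"
    and R_bounded: "products_bounded d R C \<theta>"
  shows "set w \<subseteq> A \<Longrightarrow> mat_norm (word_prod d w) \<le>
    C ^ (length (filter (\<lambda>M. M \<notin> R) w) + 1) * (D / \<theta>) ^ length (filter (\<lambda>M. M \<notin> R) w) * \<theta> ^ length w"
proof (induction w rule: length_induct)
  case (1 w)
  define r where "r = takeWhile (\<lambda>M. M \<in> R) w"
  have rR: "set r \<subseteq> R" unfolding r_def by (auto dest: set_takeWhileD)
  have rc: "set r \<subseteq> carrier_mat d d" using rR R A by auto
  have r_norm: "mat_norm (word_prod d r) \<le> C * \<theta> ^ length r"
    using R_bounded word_prod_mem_products[OF rR] unfolding products_bounded_def by blast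
  show ?case
  proof (cases "dropWhile (\<lambda>M. M \<in> R) w")
    case Nil
    hence "w = r" unfolding r_def by (metis takeWhile_dropWhile_id append_Nil2)
    thus ?thesis using r_norm rR by (simp add: filter_empty_conv subset_iff)
  next
    case (Cons M w')
    have w: "w = r @ M # w'" unfolding r_def using Cons takeWhile_dropWhile_id[of _ w] by metis
    have M: "M \<notin> R" using hd_dropWhile[of "\<lambda>M. M \<in> R" w] Cons by auto
    have MA: "M \<in> A" and w'A: "set w' \<subseteq> A" using "1.prems" w by auto
    have Mc: "M \<in> carrier_mat d d" and w'c: "set w' \<subseteq> carrier_mat d d" using MA w'A A by auto
    define j where "j = length (filter (\<lambda>M. M \<notin> R) w')"
    have j: "length (filter (\<lambda>M. M \<notin> R) w) = Suc j"
      unfolding w j_def using rR M by (auto simp: filter_empty_conv)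
    have IH: "mat_norm (word_prod d w') \<le> C ^ (j + 1) * (D / \<theta>) ^ j * \<theta> ^ length w'"
      using "1.IH" w'A unfolding j_def w by auto
    have "word_prod d w = word_prod d r * (M * word_prod d w')"
      unfolding w using word_prod_append[OF rc, of "M # w'"] Mc w'c by simp
    hence "mat_norm (word_prod d w) \<le> mat_norm (word_prod d r) * mat_norm (M * word_prod d w')"
      using word_prod_carrier[OF rc] Mc word_prod_carrier[OF w'c]
      by (simp add: mat_norm_mult_le[of _ d d _ d])
    also have "\<dots> \<le> (C * \<theta> ^ length r) * (D * (C ^ (j + 1) * (D / \<theta>) ^ j * \<theta> ^ length w'))"
    proof (intro mult_mono)
      show "mat_norm (M * word_prod d w') \<le> D * (C ^ (j + 1) * (D / \<theta>) ^ j * \<theta> ^ length w')"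
        using mat_norm_mult_le[OF Mc word_prod_carrier[OF w'c]] D(2)[OF MA] IH
        by (meson mult_mono mat_norm_nonneg D(1) order_trans)
    qed (use r_norm C \<theta> D mat_norm_nonneg in auto)
    also have "\<dots> = C ^ (Suc j + 1) * (D / \<theta>) ^ Suc j * \<theta> ^ length w"
      unfolding w using \<theta> by (simp add: power_add field_simps)
    finally show ?thesis unfolding j .
  qed
qed

lemma distinct_low_letter_words_bounded:
  assumes A: "finite A" "A \<subseteq> carrier_mat d d" and R: "R \<subseteq> A" and \<theta>: "\<theta> > 0" and C: "C \<ge> 1"
    and R_bounded: "products_bounded d R C \<theta>"
  obtains K where "K \<ge> 1"
    "\<And>w. set w \<subseteq> A \<Longrightarrow> distinct (filter (\<lambda>M. M \<notin> R) w) \<Longrightarrow>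
      mat_norm (word_prod d w) \<le> K * \<theta> ^ length w"
proof -
  define D where "D = (\<Sum>M\<in>A. mat_norm M)"
  have D: "D \<ge> 0" "\<And>M. M \<in> A \<Longrightarrow> mat_norm M \<le> D"
    unfolding D_def using A(1) by (auto intro: sum_nonneg member_le_sum mat_norm_nonneg)
  define k where "k = card (A - R)"
  define K where "K = C ^ (k + 1) * max 1 (D / \<theta>) ^ k"
  have "1 \<le> C ^ (k + 1)" "1 \<le> max 1 (D / \<theta>) ^ k" using C by (intro one_le_power; simp)+
  hence "1 \<le> K" unfolding K_def using mult_mono[of 1 "C ^ (k + 1)" 1] by simp
  moreover have "mat_norm (word_prod d w) \<le> K * \<theta> ^ length w"
    if w: "set w \<subseteq> A" and dist: "distinct (filter (\<lambda>M. M \<notin> R) w)" for w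
  proof -
    define j where "j = length (filter (\<lambda>M. M \<notin> R) w)"
    have "j = card (set (filter (\<lambda>M. M \<notin> R) w))" unfolding j_def by (simp only: distinct_card[OF dist])
    also have "\<dots> \<le> k" unfolding k_def using w A(1) by (intro card_mono) auto
    finally have jk: "j \<le> k" .
    have "mat_norm (word_prod d w) \<le> C ^ (j + 1) * (D / \<theta>) ^ j * \<theta> ^ length w"
      unfolding j_def by (rule word_prod_norm_le_segments[OF A(2) R \<theta> C D R_bounded w])
    also have "\<dots> \<le> K * \<theta> ^ length w"
      unfolding K_def
    proof (intro mult_right_mono mult_mono)
      show "C ^ (j + 1) \<le> C ^ (k + 1)" using C jk by (intro power_increasing) auto
      have "(D / \<theta>) ^ j \<le> max 1 (D / \<theta>) ^ j" using D \<theta> by (intro power_mono) auto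
      also have "\<dots> \<le> max 1 (D / \<theta>) ^ k" using jk by (intro power_increasing) auto
      finally show "(D / \<theta>) ^ j \<le> max 1 (D / \<theta>) ^ k" .
    qed (use C D \<theta> in auto)
    finally show ?thesis .
  qed
  ultimately show ?thesis using that by blast
qed

lemma spectral_radius_uniformly_below_jsr:
  assumes A: "finite A" "A \<noteq> {}" "A \<subseteq> carrier_mat d d" and d: "d > 0"
    and no_fp: "\<not> finiteness_property d A"
    and \<theta>: "0 < \<theta>" "\<theta> < jsr d A" and K: "K \<ge> 1"
  obtains \<eta> where "\<theta> \<le> \<eta>" "\<eta> < jsr d A"
    "\<And>l P. l \<ge> 1 \<Longrightarrow> P \<in> products d A l \<Longrightarrow> mat_norm P \<le> K * \<theta> ^ l \<Longrightarrow>
      spectral_radius P \<le> \<eta> ^ l"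
proof -
  define \<eta>1 where "\<eta>1 = (\<theta> + jsr d A) / 2"
  have \<eta>1: "\<theta> < \<eta>1" "\<eta>1 < jsr d A" using \<theta> unfolding \<eta>1_def by auto
  \<comment> \<open>Long products are handled by the norm bound, since \<open>K \<theta>\<^sup>l \<le> \<eta>1\<^sup>l\<close> eventually; the
    finitely many shorter lengths by the lack of the finiteness property.\<close>
  have "(\<lambda>l. (\<theta> / \<eta>1) ^ l) \<longlonglongrightarrow> 0" using \<theta> \<eta>1 by (intro LIMSEQ_power_zero) auto
  then obtain L where L: "\<And>l. l \<ge> L \<Longrightarrow> (\<theta> / \<eta>1) ^ l < 1 / K"
    using order_tendstoD(2)[of _ 0 sequentially "1 / K"] K unfolding eventually_sequentially by auto
  define T where "T = (\<Union>l\<in>{1..<L}. (\<lambda>P. spectral_radius P powr (1 / real l)) ` products d A l)"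
  have T: "finite T" "\<And>x. x \<in> T \<Longrightarrow> x < jsr d A"
    unfolding T_def using A spectral_radius_root_less_jsr[OF A d no_fp] by (auto simp: finite_products)
  define \<eta> where "\<eta> = Max (insert \<eta>1 T)"
  have \<eta>: "\<eta>1 \<le> \<eta>" "\<And>x. x \<in> T \<Longrightarrow> x \<le> \<eta>" "\<eta> < jsr d A"
    unfolding \<eta>_def using T \<eta>1 by auto
  have "spectral_radius P \<le> \<eta> ^ l"
    if l: "l \<ge> 1" and P: "P \<in> products d A l" and P_norm: "mat_norm P \<le> K * \<theta> ^ l" for l P
  proof (cases "l \<ge> L")
    case True
    have Pc: "P \<in> carrier_mat d d" using products_carrier[OF A(3)] P by auto
    have "spectral_radius P \<le> K * \<theta> ^ l" using spectral_radius_le_mat_norm[OF Pc d] P_norm by simp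
    also have "\<dots> = K * (\<theta> / \<eta>1) ^ l * \<eta>1 ^ l" using \<eta>1 \<theta> by (simp add: power_divide)
    also have "\<dots> \<le> K * (1 / K) * \<eta>1 ^ l"
      using L[OF True] K \<eta>1 \<theta> by (intro mult_right_mono mult_left_mono) auto
    also have "\<dots> \<le> \<eta> ^ l" using K \<eta>1 \<theta> \<eta> by (simp add: power_mono)
    finally show ?thesis .
  next
    case False
    have Pc: "P \<in> carrier_mat d d" using products_carrier[OF A(3)] P by auto
    define x where "x = spectral_radius P powr (1 / real l)"
    have "x \<in> T" unfolding T_def x_def using False l P by auto
    have "spectral_radius P = x ^ l"
      unfolding x_def using powr_inverse_power[OF spectral_radius_nonneg[OF Pc d]] l by simp
    also have "\<dots> \<le> \<eta> ^ l" using \<eta>(2)[OF \<open>x \<in> T\<close>] by (intro power_mono) (auto simp: x_def)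
    finally show ?thesis .
  qed
  thus ?thesis using that \<eta> \<eta>1 by (meson less_imp_le order_trans)
qed

lemma word_prod_cancel_loop:
  assumes c: "set (w1 @ a # z @ a # w2) \<subseteq> carrier_mat d d"
    and loop: "a * word_prod d z * a = c \<cdot>\<^sub>m a"
  shows "word_prod d (w1 @ a # z @ a # w2) = c \<cdot>\<^sub>m word_prod d (w1 @ a # w2)"
proof -
  have a: "a \<in> carrier_mat d d" and w1: "set w1 \<subseteq> carrier_mat d d"
    and Z: "word_prod d z \<in> carrier_mat d d" and W2: "word_prod d w2 \<in> carrier_mat d d"
    using c by (auto intro: word_prod_carrier)
  have "word_prod d (a # z @ a # w2) = (a * word_prod d z * a) * word_prod d w2"
    using c a Z W2 by (simp add: word_prod_append assoc_mult_mat[of _ d d _ d _ d])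
  also have "\<dots> = c \<cdot>\<^sub>m (a * word_prod d w2)" unfolding loop using a W2 by (rule mult_smult_assoc_mat)
  finally have "word_prod d (a # z @ a # w2) = c \<cdot>\<^sub>m word_prod d (a # w2)" by simp
  thus ?thesis
    using c w1 a W2 word_prod_carrier[OF w1]
    by (simp add: word_prod_append mult_smult_distrib[of "word_prod d w1" d d "a * word_prod d w2" d])
qed

lemma word_prod_norm_le_by_cancellation:
  assumes A: "A \<subseteq> carrier_mat d d" and d: "d > 0"
    and low_rank: "\<And>a. a \<in> A - R \<Longrightarrow> vec_space.rank d a < 2"
    and \<eta>: "\<eta> \<ge> 0" and K: "K \<ge> 0"
    and norm_bound: "\<And>w. set w \<subseteq> A \<Longrightarrow> distinct (filter (\<lambda>M. M \<notin> R) w) \<Longrightarrow>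
      mat_norm (word_prod d w) \<le> K * \<eta> ^ length w"
    and spectral_bound: "\<And>w. set w \<subseteq> A \<Longrightarrow> w \<noteq> [] \<Longrightarrow> distinct (filter (\<lambda>M. M \<notin> R) w) \<Longrightarrow>
      spectral_radius (word_prod d w) \<le> \<eta> ^ length w"
  shows "set w \<subseteq> A \<Longrightarrow> mat_norm (word_prod d w) \<le> K * \<eta> ^ length w"
proof (induction w rule: length_induct)
  case (1 w)
  show ?case
  proof (cases "distinct (filter (\<lambda>M. M \<notin> R) w)")
    case False
    then obtain w1 a z w2 where w: "w = w1 @ a # z @ a # w2" and aR: "a \<notin> R"
      and dist: "distinct (filter (\<lambda>M. M \<notin> R) (a # z))"
      by (rule not_distinct_filter_split)
    have wA: "set (w1 @ a # z @ a # w2) \<subseteq> A" using "1.prems" w by simp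
    hence a: "a \<in> carrier_mat d d" and Z: "word_prod d z \<in> carrier_mat d d"
      using A by (auto intro: word_prod_carrier)
    obtain c where c: "a * word_prod d z * a = c \<cdot>\<^sub>m a"
      and c_sr: "cmod c \<le> spectral_radius (a * word_prod d z)"
      using rank_less_2_sandwich[OF a low_rank Z d] aR wA by auto
    have "spectral_radius (a * word_prod d z) \<le> \<eta> ^ length (a # z)"
      using spectral_bound[of "a # z"] wA dist by simp
    with c_sr have c_le: "cmod c \<le> \<eta> ^ length (a # z)" by (rule order_trans)
    have "length (w1 @ a # w2) < length w" "set (w1 @ a # w2) \<subseteq> A" using w wA by auto
    hence IH: "mat_norm (word_prod d (w1 @ a # w2)) \<le> K * \<eta> ^ length (w1 @ a # w2)"
      using "1.IH" by blast
    have "mat_norm (word_prod d w) = cmod c * mat_norm (word_prod d (w1 @ a # w2))"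
      unfolding w word_prod_cancel_loop[OF wA[THEN subset_trans, OF A] c] mat_norm_smult ..
    also have "\<dots> \<le> \<eta> ^ length (a # z) * (K * \<eta> ^ length (w1 @ a # w2))"
      using c_le IH \<eta> by (intro mult_mono) (auto simp: mat_norm_nonneg)
    also have "\<dots> = K * \<eta> ^ length w" unfolding w by (simp add: power_add mult_ac)
    finally show ?thesis .
  qed (use norm_bound "1.prems" in simp)
qed

section \<open>The part of rank at least two\<close>

locale no_finiteness_property =
  fixes d :: nat and A R :: "complex mat set"
  assumes dim_pos: "d > 0" and finite: "finite A" and nonempty: "A \<noteq> {}"
    and carrier: "A \<subseteq> carrier_mat d d" and no_fp: "\<not> finiteness_property d A"
    and subset: "R \<subseteq> A" and low_rank: "\<And>a. a \<in> A - R \<Longrightarrow> vec_space.rank d a < 2"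
begin

lemma jsr_pos: "jsr d A > 0"
proof -
  obtain M where "M \<in> A" using nonempty by blast
  hence "M * 1\<^sub>m d \<in> products d A 1" by auto
  hence "spectral_radius (M * 1\<^sub>m d) powr (1 / real 1) < jsr d A"
    by (intro spectral_radius_root_less_jsr[OF finite nonempty carrier dim_pos no_fp]) simp_all
  moreover have "spectral_radius (M * 1\<^sub>m d) powr (1 / real 1) \<ge> 0" by simp
  ultimately show ?thesis by linarith
qed

lemma not_products_bounded:
  assumes \<theta>: "0 < \<theta>" "\<theta> < jsr d A" and C: "C \<ge> 1"
  shows "\<not> products_bounded d R C \<theta>"
proof
  assume "products_bounded d R C \<theta>"
  then obtain K where K: "K \<ge> 1" and distinct_bound: "\<And>w. set w \<subseteq> A \<Longrightarrow>
      distinct (filter (\<lambda>M. M \<notin> R) w) \<Longrightarrow> mat_norm (word_prod d w) \<le> K * \<theta> ^ length w"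
    using distinct_low_letter_words_bounded[OF finite carrier subset \<theta>(1) C] by blast
  obtain \<eta> where \<eta>: "\<theta> \<le> \<eta>" "\<eta> < jsr d A" and spectral_bound: "\<And>l P. l \<ge> 1 \<Longrightarrow>
      P \<in> products d A l \<Longrightarrow> mat_norm P \<le> K * \<theta> ^ l \<Longrightarrow> spectral_radius P \<le> \<eta> ^ l"
    using spectral_radius_uniformly_below_jsr[OF finite nonempty carrier dim_pos no_fp \<theta> K] by blast
  have "mat_norm (word_prod d w) \<le> K * \<eta> ^ length w" if "set w \<subseteq> A" for w
  proof (rule word_prod_norm_le_by_cancellation[OF carrier dim_pos low_rank _ _ _ _ that])
    fix w assume w: "set w \<subseteq> A" "distinct (filter (\<lambda>M. M \<notin> R) w)"
    show "mat_norm (word_prod d w) \<le> K * \<eta> ^ length w"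
      using distinct_bound[OF w] \<theta> \<eta>(1) K
      by (meson order_trans mult_left_mono power_mono less_imp_le zero_le_one)
    assume "w \<noteq> []"
    hence "length w \<ge> 1" by (cases w) auto
    thus "spectral_radius (word_prod d w) \<le> \<eta> ^ length w"
      by (rule spectral_bound[OF _ word_prod_mem_products[OF w(1)] distinct_bound[OF w]])
  qed (use \<theta> \<eta> K in auto)
  hence "products_bounded d A K \<eta>" unfolding products_bounded_def products_eq_word_prods by auto
  hence "jsr d A \<le> \<eta>" using jsr_le_of_products_bounded[OF finite nonempty carrier] K \<theta> \<eta> by simp
  thus False using \<eta> by simp
qed

lemma nonempty_high_rank: "R \<noteq> {}"
proof
  assume "R = {}"
  have "products_bounded d R (max 1 (mat_norm (1\<^sub>m d))) (jsr d A / 2)"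
    unfolding products_bounded_def
  proof (intro allI ballI)
    fix m Q assume "Q \<in> products d R m"
    thus "mat_norm Q \<le> max 1 (mat_norm (1\<^sub>m d)) * (jsr d A / 2) ^ m"
      using \<open>R = {}\<close> by (cases m) auto
  qed
  thus False using not_products_bounded jsr_pos by simp
qed

lemma not_singleton_high_rank: "R \<noteq> {B}"
proof
  assume R: "R = {B}"
  hence B: "B \<in> carrier_mat d d" "B * 1\<^sub>m d \<in> products d A 1" using subset carrier by auto
  have "spectral_radius B < jsr d A"
    using spectral_radius_root_less_jsr[OF finite nonempty carrier dim_pos no_fp _ B(2)] B(1) by simp
  then obtain \<theta> where \<theta>: "spectral_radius B < \<theta>" "\<theta> < jsr d A" using dense by blast
  obtain C where "C \<ge> 1" "\<And>m. mat_norm (B ^\<^sub>m m) \<le> C * \<theta> ^ m"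
    using mat_norm_pow_le_geometric[OF B(1) dim_pos \<theta>(1)] by blast
  hence "products_bounded d R C \<theta>" "C \<ge> 1"
    unfolding products_bounded_def R products_singleton[OF B(1)] by auto
  thus False using not_products_bounded \<theta> spectral_radius_nonneg[OF B(1) dim_pos] by simp
qed

lemma jsr_high_rank_eq: "jsr d R = jsr d A"
proof (rule ccontr)
  have R: "finite R" "R \<noteq> {}" "R \<subseteq> carrier_mat d d"
    using finite subset carrier nonempty_high_rank finite_subset by auto
  assume "jsr d R \<noteq> jsr d A"
  hence "jsr d R < jsr d A" using jsr_mono[OF subset R(2) finite carrier] by simp
  then obtain \<theta> where \<theta>: "jsr d R < \<theta>" "\<theta> < jsr d A" using dense by blast
  then obtain C where "C \<ge> 1" "products_bounded d R C \<theta>"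
    using products_bounded_of_jsr_less[OF R] by blast
  thus False using not_products_bounded \<theta> jsr_nonneg[OF R] by simp
qed

end

theorem corollary2:
  fixes d :: nat and A :: "complex mat set"
  assumes "d > 0" and "finite A" and "A \<noteq> {}" and "A \<subseteq> carrier_mat d d"
    and "\<not> finiteness_property d A"
  shows "card {M \<in> A. vec_space.rank d M \<ge> 2} \<ge> 2
       \<and> jsr d A = jsr d {M \<in> A. vec_space.rank d M \<ge> 2}
       \<and> \<not> finiteness_property d {M \<in> A. vec_space.rank d M \<ge> 2}"
proof -
  define R where "R = {M \<in> A. vec_space.rank d M \<ge> 2}"
  interpret no_finiteness_property d A R
    using assms unfolding R_def by unfold_locales auto
  have "card R \<noteq> 0" "card R \<noteq> 1"
    using nonempty_high_rank not_singleton_high_rank finite_subset[OF subset finite]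
    by (auto simp: card_1_singleton_iff)
  moreover have "\<not> finiteness_property d R"
    using not_finiteness_property_of_subset[OF finite nonempty carrier dim_pos no_fp subset
        nonempty_high_rank jsr_high_rank_eq] .
  ultimately show ?thesis using jsr_high_rank_eq unfolding R_def by simp
qed

end
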